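(* Consider the setting and certainty-equivalent controller described in the context. The estimation mismatch $\tilde{e}_k=\check{x}_k-\hat{x}_k$, where $\check{x}_k=\mathbb{E}[x_k\mid\mathcal{I}^e_k]$, satisfies $\tilde{e}_0=x_0-m_0$ and, for $k\in\mathcal{K}$, $$\tilde{e}_{k+1}=(1-\delta_k)A\tilde{e}_k+\sum_{t=\zeta_{k+1}}^{\zeta_k}A^tw_{k-t}.$$
   Context: Let $n,m\ge 1$, $N\in\mathbb{N}$, $\mathcal{K}=\{0,1,\dots,N\}$. A process evolves as $x_{k+1}=Ax_k+Bu_k+w_k$ with output $y_k=x_{k-\tau_k}$, where $A\in\mathbb{R}^{n\times n}$, $B\in\mathbb{R}^{n\times m}$, $w_k$ is Gaussian white noise with zero mean and covariance $W\succ0$, $x_0$ is Gaussian with mean $m_0$ and covariance $M_0$, $\tau_k\in\mathbb{N}_0$ are random delays with known distribution and $\tau_0=0$, all mutually independent. An event trigger chooses $\delta_k\in\{0,1\}$ (transmission to the controller, received at time $k+1$). Ages of information: at the event trigger $\zeta_0=0$, $\zeta_k=\tau_k$ if $\tau_k<\zeta_{k-1}+1$ and $\zeta_k=\zeta_{k-1}+1$ otherwise; at the controller $\eta_0=\infty$, $\eta_k=\zeta_{k-1}+1$ if $\delta_{k-1}=1$ and $\eta_k=\eta_{k-1}+1$ otherwise. The event trigger's information set is $\mathcal{I}^e_k=\{x_{t-\zeta_t},x_{t-\eta_t},\delta_s,u_s : 0\le t\le k,\ 0\le s<k\}$ (infinite-age entries void). Let $Q\succeq0$, $R\succ0$, $S_{N+1}=Q$,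 $S_k=Q+A^TS_{k+1}A-A^TS_{k+1}B(B^TS_{k+1}B+R)^{-1}B^TS_{k+1}A$, $L_k=(B^TS_{k+1}B+R)^{-1}B^TS_{k+1}A$. The controller applies $u_k=-L_k\hat{x}_k$, where $\hat{x}_0=m_0$ and $\hat{x}_{k+1}=A^{\zeta_k+1}x_{k-\zeta_k}+\sum_{t=0}^{\zeta_k}A^tBu_{k-t}$ if $\delta_k=1$, and $\hat{x}_{k+1}=A\hat{x}_k+Bu_k$ if $\delta_k=0$. A sum whose lower index exceeds its upper index is zero. *)

theory Defs
  imports "HOL-Probability.Probability"
begin

definition matpow :: "real^'n^'n \<Rightarrow> nat \<Rightarrow> real^'n^'n" where
  "matpow A t = ((\<lambda>X. A ** X) ^^ t) (mat 1)"

definition psd_mat :: "real^'n^'n \<Rightarrow> bool" where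
  "psd_mat C \<longleftrightarrow> transpose C = C \<and> (\<forall>v. 0 \<le> v \<bullet> (C *v v))"

definition pd_mat :: "real^'n^'n \<Rightarrow> bool" where
  "pd_mat C \<longleftrightarrow> transpose C = C \<and> (\<forall>v. v \<noteq> 0 \<longrightarrow> 0 < v \<bullet> (C *v v))"

text \<open>riccati_rev j = S_{N+1-j}; so riccati_rev 0 = S_{N+1} = Q.\<close>
fun riccati_rev :: "real^'n^'n \<Rightarrow> real^'m^'n \<Rightarrow> real^'n^'n \<Rightarrow> real^'m^'m \<Rightarrow> nat \<Rightarrow> real^'n^'n" where
  "riccati_rev A B Q R 0 = Q"
| "riccati_rev A B Q R (Suc j) =
     (let S = riccati_rev A B Q R j in
        Q + transpose A ** S ** A
          - transpose A ** S ** B ** matrix_inv (transpose B ** S ** B + R) ** transpose B ** S ** A)"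

definition riccati_S :: "real^'n^'n \<Rightarrow> real^'m^'n \<Rightarrow> real^'n^'n \<Rightarrow> real^'m^'m \<Rightarrow> nat \<Rightarrow> nat \<Rightarrow> real^'n^'n" where
  "riccati_S A B Q R N k = riccati_rev A B Q R (N + 1 - k)"

definition lqr_gain :: "real^'n^'n \<Rightarrow> real^'m^'n \<Rightarrow> real^'n^'n \<Rightarrow> real^'m^'m \<Rightarrow> nat \<Rightarrow> nat \<Rightarrow> real^'n^'m" where
  "lqr_gain A B Q R N k =
     (let S = riccati_S A B Q R N (k + 1) in
        matrix_inv (transpose B ** S ** B + R) ** transpose B ** S ** A)"

text \<open>Age at the event trigger: zeta_0 = 0, zeta_k = tau_k if tau_k < zeta_{k-1}+1, else zeta_{k-1}+1.\<close>
fun zeta :: "(nat \<Rightarrow> 'w \<Rightarrow> nat) \<Rightarrow> nat \<Rightarrow> 'w \<Rightarrow> nat" where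
  "zeta tau 0 \<omega> = 0"
| "zeta tau (Suc k) \<omega> =
     (if tau (Suc k) \<omega> < zeta tau k \<omega> + 1 then tau (Suc k) \<omega> else zeta tau k \<omega> + 1)"

text \<open>Age at the controller: eta_0 = infinity, eta_{k+1} = zeta_k + 1 if delta_k = 1, else eta_k + 1.
  The transmission decision delta_k is boolean (True = 1, False = 0).\<close>
fun eta :: "(nat \<Rightarrow> 'w \<Rightarrow> nat) \<Rightarrow> (nat \<Rightarrow> 'w \<Rightarrow> bool) \<Rightarrow> nat \<Rightarrow> 'w \<Rightarrow> enat" where
  "eta tau delta 0 \<omega> = \<infinity>"
| "eta tau delta (Suc k) \<omega> =
     (if delta k \<omega> then enat (zeta tau k \<omega> + 1) else eta tau delta k \<omega> + 1)"

text \<open>cl_hist ... k w j = (x_j, xhat_j) for j \<le> k, built by forward recursion; L is the gain sequence.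
  u_j = - L_j xhat_j.\<close>
fun cl_hist :: "real^'n^'n \<Rightarrow> real^'m^'n \<Rightarrow> (nat \<Rightarrow> real^'n^'m) \<Rightarrow> real^'n
    \<Rightarrow> ('w \<Rightarrow> real^'n) \<Rightarrow> (nat \<Rightarrow> 'w \<Rightarrow> real^'n) \<Rightarrow> (nat \<Rightarrow> 'w \<Rightarrow> nat) \<Rightarrow> (nat \<Rightarrow> 'w \<Rightarrow> bool)
    \<Rightarrow> nat \<Rightarrow> 'w \<Rightarrow> (nat \<Rightarrow> (real^'n) \<times> (real^'n))" where
  "cl_hist A B L m0 x0 w tau delta 0 \<omega> = (\<lambda>_. (x0 \<omega>, m0))"
| "cl_hist A B L m0 x0 w tau delta (Suc k) \<omega> =
     (let h = cl_hist A B L m0 x0 w tau delta k \<omega>;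
          x = (\<lambda>j. fst (h j));
          xh = (\<lambda>j. snd (h j));
          u = (\<lambda>j. - (L j *v xh j));
          z = zeta tau k \<omega>;
          xn = A *v x k + B *v u k + w k \<omega>;
          xhn = (if delta k \<omega>
                 then matpow A (z + 1) *v x (k - z) + (\<Sum>t = 0..z. matpow A t *v (B *v u (k - t)))
                 else A *v xh k + B *v u k)
      in h(Suc k := (xn, xhn)))"

definition cl_state where
  "cl_state A B L m0 x0 w tau delta k \<omega> = fst (cl_hist A B L m0 x0 w tau delta k \<omega> k)"

definition cl_est where
  "cl_est A B L m0 x0 w tau delta k \<omega> = snd (cl_hist A B L m0 x0 w tau delta k \<omega> k)"

definition cl_input where
  "cl_input A B L m0 x0 w tau delta k \<omega> = - (L k *v cl_est A B L m0 x0 w tau delta k \<omega>)"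

definition gen_events :: "'w measure \<Rightarrow> 'b measure \<Rightarrow> ('w \<Rightarrow> 'b) \<Rightarrow> 'w set set" where
  "gen_events M N f = {f -` S \<inter> space M | S. S \<in> sets N}"

text \<open>sigma-algebra generated by I^e_k = {x_{t-zeta_t}, x_{t-eta_t}, delta_s, u_s : t \<le> k, s < k},
  where the ages (time stamps) zeta_t, eta_t are part of the information, and a void entry
  (eta_t = infinity) is represented by the value 0 (its voidness is known through eta_t).\<close>
definition trigger_info ::
  "'w measure \<Rightarrow> (nat \<Rightarrow> 'w \<Rightarrow> real^'n) \<Rightarrow> (nat \<Rightarrow> 'w \<Rightarrow> real^'m) \<Rightarrow> (nat \<Rightarrow> 'w \<Rightarrow> nat)
     \<Rightarrow> (nat \<Rightarrow> 'w \<Rightarrow> bool) \<Rightarrow> nat \<Rightarrow> 'w measure" where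
  "trigger_info M x u tau delta k = sigma (space M)
     ((\<Union>t\<in>{..k}. gen_events M borel (\<lambda>\<omega>. x (t - zeta tau t \<omega>) \<omega>))
    \<union> (\<Union>t\<in>{..k}. gen_events M (count_space UNIV) (zeta tau t))
    \<union> (\<Union>t\<in>{..k}. gen_events M borel
          (\<lambda>\<omega>. case eta tau delta t \<omega> of enat j \<Rightarrow> x (t - j) \<omega> | \<infinity> \<Rightarrow> 0))
    \<union> (\<Union>t\<in>{..k}. gen_events M (count_space UNIV) (eta tau delta t))
    \<union> (\<Union>s\<in>{..<k}. gen_events M (count_space UNIV) (delta s))
    \<union> (\<Union>s\<in>{..<k}. gen_events M borel (u s)))"

definition cond_exp_vec :: "'w measure \<Rightarrow> 'w measure \<Rightarrow> ('w \<Rightarrow> real^'n) \<Rightarrow> 'w \<Rightarrow> real^'n" where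
  "cond_exp_vec M F X \<omega> = (\<chi> i. real_cond_exp M F (\<lambda>\<eta>. X \<eta> $ i) \<omega>)"

text \<open>X is Gaussian with mean m and covariance C: every projection a.X is N(a.m, a^T C a)
  (degenerate = almost surely constant when a^T C a = 0).\<close>
definition gaussian_vec :: "'w measure \<Rightarrow> ('w \<Rightarrow> real^'n) \<Rightarrow> real^'n \<Rightarrow> real^'n^'n \<Rightarrow> bool" where
  "gaussian_vec M X m C \<longleftrightarrow> X \<in> borel_measurable M \<and>
     (\<forall>a. (a \<bullet> (C *v a) = 0 \<longrightarrow> (AE \<omega> in M. a \<bullet> X \<omega> = a \<bullet> m)) \<and>
          (0 < a \<bullet> (C *v a) \<longrightarrow>
             distributed M lborel (\<lambda>\<omega>. a \<bullet> X \<omega>) (normal_density (a \<bullet> m) (sqrt (a \<bullet> (C *v a))))))"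

datatype prim_idx = PX0 | PW nat | PTau nat

definition prim_events :: "'w measure \<Rightarrow> ('w \<Rightarrow> real^'n) \<Rightarrow> (nat \<Rightarrow> 'w \<Rightarrow> real^'n)
    \<Rightarrow> (nat \<Rightarrow> 'w \<Rightarrow> nat) \<Rightarrow> prim_idx \<Rightarrow> 'w set set" where
  "prim_events M x0 w tau i = (case i of
      PX0 \<Rightarrow> gen_events M borel x0
    | PW k \<Rightarrow> gen_events M borel (w k)
    | PTau k \<Rightarrow> gen_events M (count_space UNIV) (tau k))"

end

theory Submission
  imports Defs
begin

text \<open>Let s_k = k - \<zeta>_k (\<open>stamp tau k\<close>) be the time of the newest measurement available
  at the trigger. Unrolling the dynamics from s_k splits x_k into
  \<open>xcheck k\<close> = A^\<zeta>_k x_(s_k) + \<Sum>_(s_k \<le> j < k) A^(k-1-j) B u_j, a function of the trigger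
  information I^e_k, plus the noise \<Sum>_(s_k \<le> j < k) A^(k-1-j) w_j that entered after s_k.
  By induction on k, using that each \<delta>_s is I^e_s-measurable, every event of I^e_k
  intersected with {s_k \<le> j} is determined by x_0, w_0, ..., w_(j-1) and the delays. As w_j is
  independent of these and centred, the noise is orthogonal to I^e_k, and
  E[x_k | I^e_k] = \<open>xcheck k\<close>. The recursion for \<open>xcheck k - Xhat k\<close> is then a
  deterministic identity whose noise term collects the w_j with s_k \<le> j < s_(k+1).\<close>

lemma matrix_vector_mult_sum: "C *v sum f S = (\<Sum>i\<in>S. C *v f i)"
  by (induction S rule: infinite_finite_induct) (auto simp: matrix_vector_right_distrib)

lemma matpow_0_mult: "matpow A 0 *v v = v"
  by (simp add: matpow_def)

lemma matpow_Suc_mult: "A *v (matpow A t *v v) = matpow A (Suc t) *v v"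
  by (simp add: matpow_def matrix_vector_mul_assoc)

lemma sum_matpow_reflect:
  assumes "a \<le> k" "b \<le> Suc k"
  shows "(\<Sum>j = a..<b. matpow A (k - j) *v v j) = (\<Sum>t = Suc k - b..k - a. matpow A t *v v (k - t))"
  by (rule sum.reindex_bij_witness[where i="\<lambda>t. k - t" and j="\<lambda>j. k - j"]) (use assms in auto)

lemma borel_measurable_bounded_linear: "bounded_linear T \<Longrightarrow> T \<in> borel_measurable borel"
  by (rule borel_measurable_continuous_onI[OF linear_continuous_on])

lemma borel_measurable_matrix_vector_mult [measurable]:
  "f \<in> borel_measurable M \<Longrightarrow> (\<lambda>x. (C::real^'a^'b) *v f x) \<in> borel_measurable M"
  by (rule measurable_compose
      [OF _ borel_measurable_bounded_linear[OF matrix_vector_mul_bounded_linear]])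

lemma integrable_matrix_vector_mult:
  "integrable M f \<Longrightarrow> integrable M (\<lambda>x. (C::real^'a^'b) *v f x)"
  by (rule integrable_bounded_linear[OF matrix_vector_mul_bounded_linear])

lemma measurable_count_space_apply2:
  fixes f :: "'a \<Rightarrow> 'b::countable" and g :: "'a \<Rightarrow> 'c::countable"
  assumes "f \<in> measurable M (count_space UNIV)" "g \<in> measurable M (count_space UNIV)"
  shows "(\<lambda>x. h (f x) (g x)) \<in> measurable M (count_space UNIV)"
proof (rule measurable_compose_countable[where f="\<lambda>i x. h i (g x)", OF _ assms(1)])
  fix i show "(\<lambda>x. h i (g x)) \<in> measurable M (count_space UNIV)"
    by (rule measurable_compose[OF assms(2) measurable_count_space])
qed

lemma integrable_finite_choice:
  fixes f :: "'a \<Rightarrow> 'b::{banach, second_countable_topology}"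
  assumes "finite I" "f \<in> borel_measurable M" "\<And>i. i \<in> I \<Longrightarrow> integrable M (g i)"
    and "\<And>x. x \<in> space M \<Longrightarrow> \<exists>i\<in>I. f x = g i x"
  shows "integrable M f"
proof (rule Bochner_Integration.integrable_bound[OF _ assms(2)])
  show "integrable M (\<lambda>x. \<Sum>i\<in>I. norm (g i x))"
    using assms(3) by auto
  show "AE x in M. norm (f x) \<le> norm (\<Sum>i\<in>I. norm (g i x))"
  proof (rule AE_I2)
    fix x assume "x \<in> space M"
    then obtain i where "i \<in> I" "f x = g i x" using assms(4) by blast
    then have "norm (f x) \<le> (\<Sum>i\<in>I. norm (g i x))"
      using assms(1) member_le_sum[of i I "\<lambda>i. norm (g i x)"] by simp
    then show "norm (f x) \<le> norm (\<Sum>i\<in>I. norm (g i x))"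
      by (simp add: sum_nonneg)
  qed
qed

lemma gen_events_subset_Pow: "gen_events M K f \<subseteq> Pow (space M)"
  by (auto simp: gen_events_def)

lemma gen_events_subset_sets:
  "f \<in> measurable H K \<Longrightarrow> space H = space M \<Longrightarrow> gen_events M K f \<subseteq> sets H"
  unfolding gen_events_def by (auto dest: measurable_sets)

lemma gen_events_Int_stable: "Int_stable (gen_events M K f)"
  unfolding Int_stable_def gen_events_def
proof safe
  fix S T assume "S \<in> sets K" "T \<in> sets K"
  then show "\<exists>R. (f -` S \<inter> space M) \<inter> (f -` T \<inter> space M) = f -` R \<inter> space M \<and> R \<in> sets K"
    by (intro exI[of _ "S \<inter> T"]) auto
qed

lemma gen_events_comp_subset:
  assumes "g \<in> measurable K K'" "f \<in> space M \<rightarrow> space K"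
  shows "gen_events M K' (\<lambda>x. g (f x)) \<subseteq> gen_events M K f"
proof
  fix a assume "a \<in> gen_events M K' (\<lambda>x. g (f x))"
  then obtain S where S: "S \<in> sets K'" "a = (\<lambda>x. g (f x)) -` S \<inter> space M"
    by (auto simp: gen_events_def)
  then have "a = f -` (g -` S \<inter> space K) \<inter> space M"
    using assms(2) by auto
  moreover have "g -` S \<inter> space K \<in> sets K"
    using measurable_sets[OF assms(1) S(1)] .
  ultimately show "a \<in> gen_events M K f"
    unfolding gen_events_def by (intro CollectI exI[of _ "g -` S \<inter> space K"]) simp
qed

lemma measurable_sigma_gen_events:
  assumes "gen_events M K f \<subseteq> G" "G \<subseteq> Pow (space M)" "f \<in> space M \<rightarrow> space K"
  shows "f \<in> measurable (sigma (space M) G) K"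
  unfolding measurable_def
proof (intro CollectI conjI ballI)
  show "f \<in> space (sigma (space M) G) \<rightarrow> space K"
    using assms(3) by (simp add: space_measure_of_conv)
  fix S assume "S \<in> sets K"
  then have "f -` S \<inter> space M \<in> G"
    using assms(1) by (auto simp: gen_events_def)
  then show "f -` S \<inter> space (sigma (space M) G) \<in> sets (sigma (space M) G)"
    by (simp add: sets_measure_of[OF assms(2)] space_measure_of_conv)
qed

lemma Int_in_sets_sigma_sets:
  assumes "a \<in> sigma_sets (space H) G" "E \<in> sets H" "\<And>g. g \<in> G \<Longrightarrow> g \<inter> E \<in> sets H"
  shows "a \<inter> E \<in> sets H"
  using assms(1)
proof induction
  case (Basic a)
  then show ?case by (rule assms(3))
next
  case Empty
  then show ?case by simp
next
  case (Compl a)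
  have "(space H - a) \<inter> E = E - a \<inter> E"
    using sets.sets_into_space[OF assms(2)] by auto
  then show ?case using Compl.IH assms(2) by auto
next
  case (Union a)
  have "(\<Union>i. a i) \<inter> E = (\<Union>i. a i \<inter> E)" by auto
  also have "\<dots> \<in> sets H"
    using Union.IH by (intro sets.countable_UN[of "\<lambda>i. a i \<inter> E" UNIV]) auto
  finally show ?case .
qed

lemma gen_events_Int_in_sets:
  assumes "f \<in> measurable (restrict_space H E) K" "E \<in> sets H" "space H = space M"
    and "a \<in> gen_events M K f"
  shows "a \<inter> E \<in> sets H"
proof -
  obtain S where S: "S \<in> sets K" "a = f -` S \<inter> space M"
    using assms(4) by (auto simp: gen_events_def)
  have E: "E \<subseteq> space M"
    using sets.sets_into_space[OF assms(2)] assms(3) by simp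
  have "f -` S \<inter> space (restrict_space H E) \<in> sets (restrict_space H E)"
    by (rule measurable_sets[OF assms(1) S(1)])
  moreover have "f -` S \<inter> space (restrict_space H E) = a \<inter> E"
    using S(2) E assms(3) by (auto simp: space_restrict_space)
  ultimately show ?thesis
    using assms(2) by (simp add: sets_restrict_space_iff)
qed

lemma (in prob_space) indep_set_mono:
  "indep_set A B \<Longrightarrow> A' \<subseteq> A \<Longrightarrow> B' \<subseteq> B \<Longrightarrow> indep_set A' B'"
  unfolding indep_set_def by (rule indep_sets_mono_sets) (auto split: bool.split)

section \<open>Ages of information\<close>

lemma zeta_le: "zeta tau k \<omega> \<le> k"
proof (induction k)
  case (Suc k)
  then show ?case by (simp only: zeta.simps split: if_split) linarith
qed simp

definition stamp :: "(nat \<Rightarrow> 'w \<Rightarrow> nat) \<Rightarrow> nat \<Rightarrow> 'w \<Rightarrow> nat" where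
  "stamp tau k \<omega> = k - zeta tau k \<omega>"

lemma stamp_le: "stamp tau k \<omega> \<le> k"
  by (simp add: stamp_def)

lemma diff_stamp: "k - stamp tau k \<omega> = zeta tau k \<omega>"
  using zeta_le[of tau k \<omega>] by (simp add: stamp_def)

lemma stamp_le_Suc: "stamp tau k \<omega> \<le> stamp tau (Suc k) \<omega>"
proof -
  have "zeta tau (Suc k) \<omega> \<le> zeta tau k \<omega> + 1" by simp
  then show ?thesis using zeta_le[of tau k \<omega>] by (simp add: stamp_def)
qed

lemma stamp_mono: "s \<le> k \<Longrightarrow> stamp tau s \<omega> \<le> stamp tau k \<omega>"
  by (rule lift_Suc_mono_le[of "\<lambda>k. stamp tau k \<omega>"]) (simp_all add: stamp_le_Suc)

lemma measurable_zeta: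
  assumes "\<And>i. i \<le> k \<Longrightarrow> tau i \<in> measurable M (count_space UNIV)"
  shows "zeta tau k \<in> measurable M (count_space UNIV)"
  using assms
proof (induction k)
  case 0
  have "zeta tau 0 = (\<lambda>_. 0)" by (rule ext) simp
  then show ?case by simp
next
  case (Suc k)
  have "zeta tau k \<in> measurable M (count_space UNIV)"
    by (rule Suc.IH) (use Suc.prems in simp)
  then have "(\<lambda>\<omega>. (\<lambda>a b. if a < b + 1 then a else b + 1) (tau (Suc k) \<omega>) (zeta tau k \<omega>))
      \<in> measurable M (count_space UNIV)"
    using Suc.prems by (rule measurable_count_space_apply2) simp_all
  moreover have "zeta tau (Suc k) =
      (\<lambda>\<omega>. (\<lambda>a b. if a < b + 1 then a else b + 1) (tau (Suc k) \<omega>) (zeta tau k \<omega>))"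
    by (rule ext) simp
  ultimately show ?case by simp
qed

lemma measurable_stamp:
  "(\<And>i. i \<le> k \<Longrightarrow> tau i \<in> measurable M (count_space UNIV)) \<Longrightarrow>
    stamp tau k \<in> measurable M (count_space UNIV)"
  unfolding stamp_def by (rule measurable_compose[OF measurable_zeta measurable_count_space])

section \<open>The closed loop\<close>

locale closed_loop =
  fixes A :: "real^'n^'n" and B :: "real^'m^'n" and L :: "nat \<Rightarrow> real^'n^'m"
    and m0 :: "real^'n" and x0 :: "'w \<Rightarrow> real^'n" and w :: "nat \<Rightarrow> 'w \<Rightarrow> real^'n"
    and tau :: "nat \<Rightarrow> 'w \<Rightarrow> nat" and delta :: "nat \<Rightarrow> 'w \<Rightarrow> bool"
begin

abbreviation "X \<equiv> cl_state A B L m0 x0 w tau delta"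
abbreviation "Xhat \<equiv> cl_est A B L m0 x0 w tau delta"
abbreviation "U \<equiv> cl_input A B L m0 x0 w tau delta"

lemma cl_hist_stable:
  "j \<le> k \<Longrightarrow> cl_hist A B L m0 x0 w tau delta k \<omega> j = cl_hist A B L m0 x0 w tau delta j \<omega> j"
proof (induction k)
  case (Suc k)
  then show ?case by (cases "j = Suc k") (simp_all add: Let_def)
qed simp

lemma cl_hist_fst: "j \<le> k \<Longrightarrow> fst (cl_hist A B L m0 x0 w tau delta k \<omega> j) = X j \<omega>"
  by (simp only: cl_hist_stable[of j k] cl_state_def)

lemma cl_hist_snd: "j \<le> k \<Longrightarrow> snd (cl_hist A B L m0 x0 w tau delta k \<omega> j) = Xhat j \<omega>"
  by (simp only: cl_hist_stable[of j k] cl_est_def)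

lemma cl_state_0: "X 0 \<omega> = x0 \<omega>"
  and cl_est_0: "Xhat 0 \<omega> = m0"
  by (simp_all add: cl_state_def cl_est_def)

lemma cl_input_eq: "U k = (\<lambda>\<omega>. - (L k *v Xhat k \<omega>))"
  by (simp add: fun_eq_iff cl_input_def)

lemma cl_state_Suc: "X (Suc k) \<omega> = A *v X k \<omega> + B *v U k \<omega> + w k \<omega>"
proof -
  have "X (Suc k) \<omega> = A *v fst (cl_hist A B L m0 x0 w tau delta k \<omega> k)
      + B *v - (L k *v snd (cl_hist A B L m0 x0 w tau delta k \<omega> k)) + w k \<omega>"
    by (simp only: cl_state_def cl_hist.simps Let_def fun_upd_same fst_conv)
  then show ?thesis
    by (simp only: cl_hist_fst[of k k] cl_hist_snd[of k k] cl_input_def order_refl)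
qed

lemma cl_est_Suc: "Xhat (Suc k) \<omega> =
    (if delta k \<omega>
     then matpow A (zeta tau k \<omega> + 1) *v X (stamp tau k \<omega>) \<omega>
       + (\<Sum>t = 0..zeta tau k \<omega>. matpow A t *v (B *v U (k - t) \<omega>))
     else A *v Xhat k \<omega> + B *v U k \<omega>)"
proof -
  let ?h = "cl_hist A B L m0 x0 w tau delta k \<omega>"
  have "Xhat (Suc k) \<omega> =
    (if delta k \<omega>
     then matpow A (zeta tau k \<omega> + 1) *v fst (?h (k - zeta tau k \<omega>))
       + (\<Sum>t = 0..zeta tau k \<omega>. matpow A t *v (B *v - (L (k - t) *v snd (?h (k - t)))))
     else A *v snd (?h k) + B *v - (L k *v snd (?h k)))"
    by (simp only: cl_est_def cl_hist.simps Let_def fun_upd_same snd_conv)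
  moreover have "(\<Sum>t = 0..zeta tau k \<omega>. matpow A t *v (B *v - (L (k - t) *v snd (?h (k - t)))))
      = (\<Sum>t = 0..zeta tau k \<omega>. matpow A t *v (B *v U (k - t) \<omega>))"
    by (rule sum.cong) (simp_all add: cl_hist_snd cl_input_def)
  ultimately show ?thesis
    by (simp add: cl_hist_fst cl_hist_snd cl_input_def stamp_def)
qed

lemma cl_state_unroll:
  assumes "m \<le> k"
  shows "X k \<omega> = matpow A (k - m) *v X m \<omega>
    + (\<Sum>j = m..<k. matpow A (k - 1 - j) *v (B *v U j \<omega> + w j \<omega>))"
  using assms
proof (induction k rule: dec_induct)
  case base
  then show ?case by (simp add: matpow_0_mult)
next
  case (step k)
  let ?v = "\<lambda>j. B *v U j \<omega> + w j \<omega>"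
  have "A *v (\<Sum>j = m..<k. matpow A (k - 1 - j) *v ?v j) = (\<Sum>j = m..<k. matpow A (k - j) *v ?v j)"
    by (auto simp: matrix_vector_mult_sum matpow_Suc_mult Suc_diff_Suc intro: sum.cong)
  moreover have "A *v (matpow A (k - m) *v X m \<omega>) = matpow A (Suc k - m) *v X m \<omega>"
    using step.hyps by (simp add: matpow_Suc_mult Suc_diff_le)
  ultimately have "A *v X k \<omega> + ?v k =
      matpow A (Suc k - m) *v X m \<omega> + ((\<Sum>j = m..<k. matpow A (k - j) *v ?v j) + matpow A 0 *v ?v k)"
    using step.IH by (simp add: matrix_vector_right_distrib matpow_0_mult)
  also have "\<dots> = matpow A (Suc k - m) *v X m \<omega> + (\<Sum>j = m..<Suc k. matpow A (Suc k - 1 - j) *v ?v j)"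
    using step.hyps by simp
  finally show ?case by (simp add: cl_state_Suc add.assoc)
qed

text \<open>\<open>xcheck k\<close> is the paper's E[x_k | I^e_k], and \<open>fresh_noise k\<close> the noise that entered
  after the newest measurement available at the trigger.\<close>

definition xcheck :: "nat \<Rightarrow> 'w \<Rightarrow> real^'n" where
  "xcheck k \<omega> = matpow A (zeta tau k \<omega>) *v X (stamp tau k \<omega>) \<omega>
    + (\<Sum>j = stamp tau k \<omega>..<k. matpow A (k - 1 - j) *v (B *v U j \<omega>))"

definition fresh_noise :: "nat \<Rightarrow> 'w \<Rightarrow> real^'n" where
  "fresh_noise k \<omega> = (\<Sum>j = stamp tau k \<omega>..<k. matpow A (k - 1 - j) *v w j \<omega>)"

lemma cl_state_split: "X k \<omega> = xcheck k \<omega> + fresh_noise k \<omega>"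
  using cl_state_unroll[OF stamp_le[of tau k \<omega>]]
  by (simp add: xcheck_def fresh_noise_def diff_stamp matrix_vector_right_distrib sum.distrib)

lemma xcheck_0: "xcheck 0 \<omega> = x0 \<omega>"
  by (simp add: xcheck_def stamp_def cl_state_0 matpow_0_mult)

lemma fresh_noise_step:
  "A *v fresh_noise k \<omega> + w k \<omega> = (\<Sum>j = stamp tau k \<omega>..<Suc k. matpow A (k - j) *v w j \<omega>)"
proof -
  have "A *v fresh_noise k \<omega> = (\<Sum>j = stamp tau k \<omega>..<k. matpow A (k - j) *v w j \<omega>)"
    unfolding fresh_noise_def
    by (auto simp: matrix_vector_mult_sum matpow_Suc_mult Suc_diff_Suc intro: sum.cong)
  then show ?thesis
    using stamp_le[of tau k \<omega>] by (simp add: matpow_0_mult)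
qed

lemma fresh_noise_Suc:
  "A *v fresh_noise k \<omega> + w k \<omega> = fresh_noise (Suc k) \<omega>
    + (\<Sum>t = zeta tau (Suc k) \<omega>..zeta tau k \<omega>. matpow A t *v w (k - t) \<omega>)"
proof -
  let ?s = "stamp tau k \<omega>" and ?s' = "stamp tau (Suc k) \<omega>"
  let ?g = "\<lambda>j. matpow A (k - j) *v w j \<omega>"
  have "(\<Sum>j = ?s..<Suc k. ?g j) = (\<Sum>j = ?s..<?s'. ?g j) + (\<Sum>j = ?s'..<Suc k. ?g j)"
    using stamp_le_Suc[of tau k \<omega>] stamp_le[of tau "Suc k" \<omega>]
    by (rule sum.atLeastLessThan_concat[symmetric])
  also have "(\<Sum>j = ?s'..<Suc k. ?g j) = fresh_noise (Suc k) \<omega>"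
    by (simp add: fresh_noise_def)
  also have "(\<Sum>j = ?s..<?s'. ?g j) = (\<Sum>t = Suc k - ?s'..k - ?s. matpow A t *v w (k - t) \<omega>)"
    using stamp_le[of tau k \<omega>] stamp_le[of tau "Suc k" \<omega>] by (rule sum_matpow_reflect)
  also have "\<dots> = (\<Sum>t = zeta tau (Suc k) \<omega>..zeta tau k \<omega>. matpow A t *v w (k - t) \<omega>)"
    by (simp only: diff_stamp)
  finally show ?thesis
    unfolding fresh_noise_step by (simp only: add.commute)
qed

lemma xcheck_Suc_minus_est:
  "xcheck (Suc k) \<omega> - Xhat (Suc k) \<omega> =
    (1 - of_bool (delta k \<omega>)) *\<^sub>R (A *v (xcheck k \<omega> - Xhat k \<omega>))
    + (\<Sum>t = zeta tau (Suc k) \<omega>..zeta tau k \<omega>. matpow A t *v w (k - t) \<omega>)"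
proof -
  define S where "S = (\<Sum>t = zeta tau (Suc k) \<omega>..zeta tau k \<omega>. matpow A t *v w (k - t) \<omega>)"
  have noise: "A *v fresh_noise k \<omega> + w k \<omega> = fresh_noise (Suc k) \<omega> + S"
    unfolding S_def by (rule fresh_noise_Suc)
  have xcheck_Suc: "xcheck (Suc k) \<omega> = X (Suc k) \<omega> - fresh_noise (Suc k) \<omega>"
    by (simp add: cl_state_split)
  show ?thesis
    unfolding S_def[symmetric]
  proof (cases "delta k \<omega>")
    case True
    let ?s = "stamp tau k \<omega>"
    have inputs: "(\<Sum>t = 0..zeta tau k \<omega>. matpow A t *v (B *v U (k - t) \<omega>))
        = (\<Sum>j = ?s..<Suc k. matpow A (k - j) *v (B *v U j \<omega>))"
    proof -
      have "(\<Sum>j = ?s..<Suc k. matpow A (k - j) *v (B *v U j \<omega>))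
          = (\<Sum>t = Suc k - Suc k..k - ?s. matpow A t *v (B *v U (k - t) \<omega>))"
        by (rule sum_matpow_reflect[OF stamp_le le_refl])
      then show ?thesis by (simp only: diff_self_eq_0 diff_stamp)
    qed
    have "X (Suc k) \<omega> = matpow A (zeta tau k \<omega> + 1) *v X ?s \<omega>
        + (\<Sum>j = ?s..<Suc k. matpow A (k - j) *v (B *v U j \<omega>))
        + (\<Sum>j = ?s..<Suc k. matpow A (k - j) *v w j \<omega>)"
      using cl_state_unroll[of ?s "Suc k" \<omega>] stamp_le[of tau k \<omega>] diff_stamp[of k tau \<omega>]
      by (simp add: Suc_diff_le matrix_vector_right_distrib sum.distrib add.assoc)
    then have "X (Suc k) \<omega> = Xhat (Suc k) \<omega> + (A *v fresh_noise k \<omega> + w k \<omega>)"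
      using True by (simp add: cl_est_Suc inputs fresh_noise_step)
    then show "xcheck (Suc k) \<omega> - Xhat (Suc k) \<omega> =
        (1 - of_bool (delta k \<omega>)) *\<^sub>R (A *v (xcheck k \<omega> - Xhat k \<omega>)) + S"
      using True by (simp add: xcheck_Suc noise)
  next
    case False
    have "X (Suc k) \<omega> = A *v Xhat k \<omega> + B *v U k \<omega> + A *v (xcheck k \<omega> - Xhat k \<omega>)
        + (A *v fresh_noise k \<omega> + w k \<omega>)"
      using cl_state_split[of k \<omega>] by (simp add: cl_state_Suc matrix_vector_right_distrib
          matrix_vector_mult_diff_distrib)
    then show "xcheck (Suc k) \<omega> - Xhat (Suc k) \<omega> =
        (1 - of_bool (delta k \<omega>)) *\<^sub>R (A *v (xcheck k \<omega> - Xhat k \<omega>)) + S"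
      using False by (simp add: xcheck_Suc noise cl_est_Suc)
  qed
qed

definition ctrl_meas :: "nat \<Rightarrow> 'w \<Rightarrow> real^'n" where
  "ctrl_meas t \<omega> = (case eta tau delta t \<omega> of enat a \<Rightarrow> X (t - a) \<omega> | \<infinity> \<Rightarrow> 0)"

lemma ctrl_meas_Suc:
  "ctrl_meas (Suc t) \<omega> = (if delta t \<omega> then X (stamp tau t \<omega>) \<omega> else ctrl_meas t \<omega>)"
  by (cases "eta tau delta t \<omega>") (auto simp: ctrl_meas_def stamp_def one_enat_def)

lemma measurable_cl_input:
  "Xhat k \<in> borel_measurable S \<Longrightarrow> U k \<in> borel_measurable S"
  unfolding cl_input_eq by measurable

lemma measurable_stamped_state:
  assumes "\<And>b. b \<le> c \<Longrightarrow> X b \<in> borel_measurable S"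
    and "stamp tau t \<in> measurable S (count_space UNIV)"
    and "\<And>\<omega>. \<omega> \<in> space S \<Longrightarrow> stamp tau t \<omega> \<le> c"
  shows "(\<lambda>\<omega>. X (stamp tau t \<omega>) \<omega>) \<in> borel_measurable S"
proof -
  have "(\<lambda>\<omega>. X (min (stamp tau t \<omega>) c) \<omega>) \<in> borel_measurable S"
    by (rule measurable_compose_countable[where f="\<lambda>i. X (min i c)", OF _ assms(2)])
      (simp add: assms(1))
  then show ?thesis
    by (rule measurable_cong[THEN iffD1, rotated]) (simp add: assms(3) min_absorb1)
qed

lemma measurable_cl_est_Suc:
  assumes "(\<lambda>\<omega>. X (stamp tau k \<omega>) \<omega>) \<in> borel_measurable S"
    and "\<And>b. b \<le> k \<Longrightarrow> U b \<in> borel_measurable S"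
    and "Xhat k \<in> borel_measurable S"
    and "zeta tau k \<in> measurable S (count_space UNIV)"
    and "delta k \<in> measurable S (count_space UNIV)"
  shows "Xhat (Suc k) \<in> borel_measurable S"
proof -
  define G where "G i \<omega> = matpow A (i + 1) *v X (stamp tau k \<omega>) \<omega>
    + (\<Sum>t = 0..i. matpow A t *v (B *v U (k - t) \<omega>))" for i \<omega>
  have "G i \<in> borel_measurable S" for i
    unfolding G_def using assms(1,2) by measurable
  then have "(\<lambda>\<omega>. G (zeta tau k \<omega>) \<omega>) \<in> borel_measurable S"
    by (rule measurable_compose_countable[OF _ assms(4)])
  moreover have "(\<lambda>\<omega>. A *v Xhat k \<omega> + B *v U k \<omega>) \<in> borel_measurable S"
    using assms(2,3) by measurable
  moreover have "{\<omega> \<in> space S. delta k \<omega>} \<in> sets S"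
    using assms(5) by (simp add: pred_def)
  moreover have "Xhat (Suc k) =
      (\<lambda>\<omega>. if delta k \<omega> then G (zeta tau k \<omega>) \<omega> else A *v Xhat k \<omega> + B *v U k \<omega>)"
    by (simp add: fun_eq_iff cl_est_Suc G_def)
  ultimately show ?thesis
    by (simp add: measurable_If)
qed

lemma measurable_eta_ctrl_meas:
  assumes "\<And>s. s < t \<Longrightarrow> delta s \<in> measurable S (count_space UNIV)"
    and "\<And>s. s < t \<Longrightarrow> zeta tau s \<in> measurable S (count_space UNIV)"
    and "\<And>s. s < t \<Longrightarrow> (\<lambda>\<omega>. X (stamp tau s \<omega>) \<omega>) \<in> borel_measurable S"
  shows "eta tau delta t \<in> measurable S (count_space UNIV) \<and> ctrl_meas t \<in> borel_measurable S"
  using assms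
proof (induction t)
  case 0
  have "eta tau delta 0 = (\<lambda>_. \<infinity>)" "ctrl_meas 0 = (\<lambda>_. 0)"
    by (auto simp: fun_eq_iff ctrl_meas_def)
  then show ?case by simp
next
  case (Suc t)
  have IH: "eta tau delta t \<in> measurable S (count_space UNIV)" "ctrl_meas t \<in> borel_measurable S"
    using Suc by simp_all
  have pred: "{\<omega> \<in> space S. delta t \<omega>} \<in> sets S"
    using Suc.prems(1)[of t] by (simp add: pred_def)
  have "eta tau delta (Suc t) =
      (\<lambda>\<omega>. if delta t \<omega> then (\<lambda>n. enat (n + 1)) (zeta tau t \<omega>)
        else (\<lambda>e. e + 1) (eta tau delta t \<omega>))"
    by (simp add: fun_eq_iff)
  moreover have "(\<lambda>\<omega>. if delta t \<omega> then (\<lambda>n. enat (n + 1)) (zeta tau t \<omega>)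
      else (\<lambda>e. e + 1) (eta tau delta t \<omega>)) \<in> measurable S (count_space UNIV)"
    by (rule measurable_If[OF measurable_compose[OF Suc.prems(2) measurable_count_space]
          measurable_compose[OF IH(1) measurable_count_space] pred]) simp
  moreover have "ctrl_meas (Suc t) = (\<lambda>\<omega>. if delta t \<omega> then X (stamp tau t \<omega>) \<omega> else ctrl_meas t \<omega>)"
    by (simp add: fun_eq_iff ctrl_meas_Suc)
  moreover have "(\<lambda>\<omega>. if delta t \<omega> then X (stamp tau t \<omega>) \<omega> else ctrl_meas t \<omega>)
      \<in> borel_measurable S"
    by (rule measurable_If[OF Suc.prems(3) IH(2) pred]) simp
  ultimately show ?case by simp
qed

end

locale closed_loop_prob = closed_loop A B L m0 x0 w tau delta + prob_space M
  for A B L m0 and x0 :: "'w \<Rightarrow> real^'n" and w tau delta and M :: "'w measure" +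
  fixes N :: nat
  assumes integrable_x0: "integrable M x0"
    and integrable_w: "\<And>k. k \<le> N \<Longrightarrow> integrable M (w k)"
    and integral_w: "\<And>k. k \<le> N \<Longrightarrow> (\<integral>\<omega>. w k \<omega> \<partial>M) = 0"
    and measurable_tau: "\<And>k. k \<le> N + 1 \<Longrightarrow> tau k \<in> measurable M (count_space UNIV)"
    and indep_prim: "prob_space.indep_sets M (prim_events M x0 w tau)
      ({PX0} \<union> PW ` {..N} \<union> PTau ` {..N + 1})"
    and measurable_delta: "\<And>k. k \<le> N \<Longrightarrow>
      delta k \<in> measurable (trigger_info M X U tau delta k) (count_space UNIV)"
begin

abbreviation "F \<equiv> trigger_info M X U tau delta"

definition trigger_gen :: "nat \<Rightarrow> 'w set set" where
  "trigger_gen k =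
     (\<Union>t\<in>{..k}. gen_events M borel (\<lambda>\<omega>. X (stamp tau t \<omega>) \<omega>))
   \<union> (\<Union>t\<in>{..k}. gen_events M (count_space UNIV) (zeta tau t))
   \<union> (\<Union>t\<in>{..k}. gen_events M borel (ctrl_meas t))
   \<union> (\<Union>t\<in>{..k}. gen_events M (count_space UNIV) (eta tau delta t))
   \<union> (\<Union>s\<in>{..<k}. gen_events M (count_space UNIV) (delta s))
   \<union> (\<Union>s\<in>{..<k}. gen_events M borel (U s))"

lemma trigger_info_eq: "F k = sigma (space M) (trigger_gen k)"
  by (simp add: trigger_info_def trigger_gen_def stamp_def ctrl_meas_def[abs_def])

lemma trigger_gen_Pow: "trigger_gen k \<subseteq> Pow (space M)"
  by (auto simp: trigger_gen_def gen_events_def)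

lemma space_trigger_info [simp]: "space (F k) = space M"
  by (simp add: trigger_info_eq space_measure_of_conv)

lemma sets_trigger_info: "sets (F k) = sigma_sets (space M) (trigger_gen k)"
  by (simp add: trigger_info_eq sets_measure_of[OF trigger_gen_Pow])

lemma measurable_trigger_info:
  "gen_events M K f \<subseteq> trigger_gen k \<Longrightarrow> f \<in> space M \<rightarrow> space K \<Longrightarrow> f \<in> measurable (F k) K"
  unfolding trigger_info_eq by (rule measurable_sigma_gen_events[OF _ trigger_gen_Pow])

lemma measurable_trigger_info_mono:
  assumes "k \<le> k'" "f \<in> measurable (F k) K"
  shows "f \<in> measurable (F k') K"
proof (rule measurable_from_subalg[OF _ assms(2)])
  have "trigger_gen k \<subseteq> trigger_gen k'"
    using assms(1) unfolding trigger_gen_def by (intro Un_mono UN_mono) auto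
  then show "subalgebra (F k') (F k)"
    by (simp add: subalgebra_def sets_trigger_info sigma_sets_mono')
qed

lemma measurable_stamped_state_trigger:
  "t \<le> k \<Longrightarrow> (\<lambda>\<omega>. X (stamp tau t \<omega>) \<omega>) \<in> borel_measurable (F k)"
  by (rule measurable_trigger_info) (auto simp: trigger_gen_def)

lemma measurable_zeta_trigger: "t \<le> k \<Longrightarrow> zeta tau t \<in> measurable (F k) (count_space UNIV)"
  by (rule measurable_trigger_info) (auto simp: trigger_gen_def)

lemma measurable_past_input_trigger: "s < k \<Longrightarrow> U s \<in> borel_measurable (F k)"
  by (rule measurable_trigger_info) (auto simp: trigger_gen_def)

lemma measurable_cl_est_trigger: "k \<le> N + 1 \<Longrightarrow> Xhat k \<in> borel_measurable (F k)"
proof (induction k)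
  case 0
  have "Xhat 0 = (\<lambda>_. m0)" by (simp add: fun_eq_iff cl_est_0)
  then show ?case by simp
next
  case (Suc k)
  show ?case
  proof (rule measurable_cl_est_Suc)
    show "(\<lambda>\<omega>. X (stamp tau k \<omega>) \<omega>) \<in> borel_measurable (F (Suc k))"
      by (rule measurable_stamped_state_trigger) simp
    show "U b \<in> borel_measurable (F (Suc k))" if "b \<le> k" for b
      by (rule measurable_past_input_trigger) (use that in simp)
    show "Xhat k \<in> borel_measurable (F (Suc k))"
      using Suc by (intro measurable_trigger_info_mono[of k, OF _ Suc.IH]) simp_all
    show "zeta tau k \<in> measurable (F (Suc k)) (count_space UNIV)"
      by (rule measurable_zeta_trigger) simp
    show "delta k \<in> measurable (F (Suc k)) (count_space UNIV)"
      by (rule measurable_trigger_info_mono[OF _ measurable_delta]) (use Suc.prems in simp_all)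
  qed
qed

lemma measurable_cl_input_trigger: "k \<le> N + 1 \<Longrightarrow> U k \<in> borel_measurable (F k)"
  by (rule measurable_cl_input[OF measurable_cl_est_trigger])

text \<open>\<open>prim_info j\<close> is generated by x_0, w_0, ..., w_(j-1) and all delays, so w_j is
  independent of it.\<close>

definition prim_gen :: "nat \<Rightarrow> 'w set set" where
  "prim_gen j = (\<Union>i\<in>{PX0} \<union> PW ` {..<j} \<union> PTau ` {..N + 1}. prim_events M x0 w tau i)"

definition prim_info :: "nat \<Rightarrow> 'w measure" where
  "prim_info j = sigma (space M) (prim_gen j)"

lemma prim_gen_Pow: "prim_gen j \<subseteq> Pow (space M)"
proof -
  have "prim_events M x0 w tau i \<subseteq> Pow (space M)" for i
    by (cases i) (simp_all add: prim_events_def gen_events_subset_Pow)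
  then show ?thesis by (auto simp: prim_gen_def)
qed

lemma space_prim_info [simp]: "space (prim_info j) = space M"
  by (simp add: prim_info_def space_measure_of_conv)

lemma sets_prim_info: "sets (prim_info j) = sigma_sets (space M) (prim_gen j)"
  by (simp add: prim_info_def sets_measure_of[OF prim_gen_Pow])

lemma measurable_prim_info:
  "gen_events M K f \<subseteq> prim_gen j \<Longrightarrow> f \<in> space M \<rightarrow> space K \<Longrightarrow> f \<in> measurable (prim_info j) K"
  unfolding prim_info_def by (rule measurable_sigma_gen_events[OF _ prim_gen_Pow])

lemma measurable_prim_info_mono:
  assumes "j \<le> j'" "f \<in> measurable (prim_info j) K"
  shows "f \<in> measurable (prim_info j') K"
proof (rule measurable_from_subalg[OF _ assms(2)])
  have "prim_gen j \<subseteq> prim_gen j'"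
    using assms(1) by (auto simp: prim_gen_def)
  then show "subalgebra (prim_info j') (prim_info j)"
    by (simp add: subalgebra_def sets_prim_info sigma_sets_mono')
qed

lemma measurable_x0_prim: "x0 \<in> borel_measurable (prim_info j)"
  by (rule measurable_prim_info) (auto simp: prim_gen_def prim_events_def)

lemma measurable_w_prim: "i < j \<Longrightarrow> w i \<in> borel_measurable (prim_info j)"
  by (rule measurable_prim_info) (auto simp: prim_gen_def prim_events_def)

lemma measurable_tau_prim: "i \<le> N + 1 \<Longrightarrow> tau i \<in> measurable (prim_info j) (count_space UNIV)"
  by (rule measurable_prim_info) (auto simp: prim_gen_def prim_events_def)

lemma measurable_zeta_prim: "t \<le> N + 1 \<Longrightarrow> zeta tau t \<in> measurable (prim_info j) (count_space UNIV)"
  by (rule measurable_zeta) (rule measurable_tau_prim; simp)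

lemma measurable_stamp_prim: "t \<le> N + 1 \<Longrightarrow> stamp tau t \<in> measurable (prim_info j) (count_space UNIV)"
  by (rule measurable_stamp) (rule measurable_tau_prim; simp)

lemma sets_prim_info_subset:
  assumes "j \<le> N + 1"
  shows "sets (prim_info j) \<subseteq> sets M"
proof -
  have "prim_events M x0 w tau i \<subseteq> sets M" if "i \<in> {PX0} \<union> PW ` {..<j} \<union> PTau ` {..N + 1}" for i
  proof -
    from that consider "i = PX0" | a where "i = PW a" "a < j" | a where "i = PTau a" "a \<le> N + 1"
      by auto
    then show ?thesis
    proof cases
      case 1
      then show ?thesis
        using gen_events_subset_sets[OF borel_measurable_integrable[OF integrable_x0]]
        by (simp add: prim_events_def)
    next
      case (2 a)
      then show ?thesis
        using gen_events_subset_sets[OF borel_measurable_integrable[OF integrable_w]] assms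
        by (simp add: prim_events_def)
    next
      case (3 a)
      then show ?thesis
        using gen_events_subset_sets[OF measurable_tau] by (simp add: prim_events_def)
    qed
  qed
  then show ?thesis
    unfolding sets_prim_info prim_gen_def by (intro sets.sigma_sets_subset UN_least)
qed

section \<open>The trigger information is stopped at the stamp\<close>

definition stamp_atMost :: "nat \<Rightarrow> nat \<Rightarrow> 'w set" where
  "stamp_atMost k j = {\<omega> \<in> space M. stamp tau k \<omega> \<le> j}"

lemma stamp_atMost_subset: "stamp_atMost k j \<subseteq> space M"
  by (auto simp: stamp_atMost_def)

lemma sets_stamp_atMost: "k \<le> N + 1 \<Longrightarrow> stamp_atMost k j \<in> sets (prim_info j')"
proof -
  assume "k \<le> N + 1"
  then have "stamp tau k -` {..j} \<inter> space (prim_info j') \<in> sets (prim_info j')"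
    by (intro measurable_sets[OF measurable_stamp_prim]) simp_all
  moreover have "stamp tau k -` {..j} \<inter> space (prim_info j') = stamp_atMost k j"
    by (auto simp: stamp_atMost_def)
  ultimately show ?thesis by simp
qed

lemma stamp_atMost_self: "stamp_atMost k k = space M"
  using stamp_le by (auto simp: stamp_atMost_def)

lemma stamp_atMost_antimono: "s \<le> k \<Longrightarrow> stamp_atMost k j \<subseteq> stamp_atMost s j"
  by (auto simp: stamp_atMost_def intro: le_trans[OF stamp_mono])

definition on_stamp :: "nat \<Rightarrow> nat \<Rightarrow> 'w measure" where
  "on_stamp k j = restrict_space (prim_info j) (stamp_atMost k j)"

lemma space_on_stamp [simp]: "space (on_stamp k j) = stamp_atMost k j"
  using stamp_atMost_subset by (auto simp: on_stamp_def space_restrict_space)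

lemma sets_on_stamp_iff:
  "k \<le> N + 1 \<Longrightarrow> a \<in> sets (on_stamp k j) \<longleftrightarrow> a \<subseteq> stamp_atMost k j \<and> a \<in> sets (prim_info j)"
  unfolding on_stamp_def
  by (rule sets_restrict_space_iff) (simp add: sets_stamp_atMost Int_absorb2 stamp_atMost_subset)

lemma measurable_on_stamp: "f \<in> measurable (prim_info j) K \<Longrightarrow> f \<in> measurable (on_stamp k j) K"
  unfolding on_stamp_def by (rule measurable_restrict_space1)

lemma gen_events_Int_stamp_atMost:
  "k \<le> N + 1 \<Longrightarrow> f \<in> measurable (on_stamp k j) K \<Longrightarrow> a \<in> gen_events M K f \<Longrightarrow>
    a \<inter> stamp_atMost k j \<in> sets (prim_info j)"
  unfolding on_stamp_def by (rule gen_events_Int_in_sets) (simp_all add: sets_stamp_atMost)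

text \<open>The trigger information at time \<open>k\<close> is contained in the primitive information stopped
  at the random time \<open>stamp tau k\<close>.\<close>

definition stopped_at_stamp :: "nat \<Rightarrow> bool" where
  "stopped_at_stamp k \<longleftrightarrow> (\<forall>j. \<forall>G\<in>sets (F k). G \<inter> stamp_atMost k j \<in> sets (prim_info j))"

lemma stopped_trigger_info_subset:
  assumes "stopped_at_stamp k"
  shows "sets (F k) \<subseteq> sets (prim_info k)"
proof
  fix G assume G: "G \<in> sets (F k)"
  then have "G \<inter> stamp_atMost k k \<in> sets (prim_info k)"
    using assms by (simp add: stopped_at_stamp_def)
  moreover have "G \<subseteq> space M"
    using sets.sets_into_space[OF G] by simp
  ultimately show "G \<in> sets (prim_info k)"
    by (simp add: stamp_atMost_self Int_absorb2)
qed

lemma measurable_delta_prim: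
  "s \<le> N \<Longrightarrow> stopped_at_stamp s \<Longrightarrow> delta s \<in> measurable (prim_info s) (count_space UNIV)"
  by (rule measurable_from_subalg[OF _ measurable_delta])
    (simp_all add: subalgebra_def stopped_trigger_info_subset)

lemma measurable_on_stamp_trigger:
  assumes "s \<le> k" "k \<le> N + 1" "stopped_at_stamp s" "f \<in> measurable (F s) K"
  shows "f \<in> measurable (on_stamp k j) K"
  unfolding measurable_def
proof (intro CollectI conjI ballI)
  show "f \<in> space (on_stamp k j) \<rightarrow> space K"
    using measurable_space[OF assms(4)] stamp_atMost_subset by auto
  fix S assume S: "S \<in> sets K"
  have "f -` S \<inter> space M \<in> sets (F s)"
    using measurable_sets[OF assms(4) S] by simp
  then have "(f -` S \<inter> space M) \<inter> stamp_atMost s j \<inter> stamp_atMost k j \<in> sets (prim_info j)"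
    using assms(3) sets_stamp_atMost[OF assms(2)] by (auto simp: stopped_at_stamp_def)
  moreover have "(f -` S \<inter> space M) \<inter> stamp_atMost s j \<inter> stamp_atMost k j
      = f -` S \<inter> space (on_stamp k j)"
    using stamp_atMost_antimono[OF assms(1), of j] stamp_atMost_subset by auto
  ultimately show "f -` S \<inter> space (on_stamp k j) \<in> sets (on_stamp k j)"
    by (simp add: sets_on_stamp_iff[OF assms(2)])
qed

lemma measurable_cl_prim:
  assumes "k \<le> N + 1" "\<And>s. s < k \<Longrightarrow> delta s \<in> measurable (prim_info s) (count_space UNIV)"
  shows "X k \<in> borel_measurable (prim_info k) \<and> Xhat k \<in> borel_measurable (prim_info k)"
  using assms
proof (induction k rule: less_induct)
  case (less k)
  show ?case
  proof (cases k)
    case 0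
    have "X 0 = x0" "Xhat 0 = (\<lambda>_. m0)"
      by (simp_all add: fun_eq_iff cl_state_0 cl_est_0)
    then show ?thesis using 0 measurable_x0_prim by simp
  next
    case (Suc a)
    have IH: "X b \<in> borel_measurable (prim_info b) \<and> Xhat b \<in> borel_measurable (prim_info b)"
      if "b \<le> a" for b
      by (rule less.IH) (use that Suc less.prems in auto)
    have X: "X b \<in> borel_measurable (prim_info a)"
      and Xhat: "Xhat b \<in> borel_measurable (prim_info a)"
      if "b \<le> a" for b
      using IH[OF that] measurable_prim_info_mono[OF that] by auto
    have U: "U b \<in> borel_measurable (prim_info a)" if "b \<le> a" for b
      using Xhat[OF that] by (rule measurable_cl_input)
    have "(\<lambda>\<omega>. A *v X a \<omega> + B *v U a \<omega>) \<in> borel_measurable (prim_info a)"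
      using X[of a] U[of a] by measurable
    then have "(\<lambda>\<omega>. A *v X a \<omega> + B *v U a \<omega>) \<in> borel_measurable (prim_info (Suc a))"
      by (rule measurable_prim_info_mono[rotated]) simp
    then have "(\<lambda>\<omega>. A *v X a \<omega> + B *v U a \<omega> + w a \<omega>) \<in> borel_measurable (prim_info (Suc a))"
      by (rule borel_measurable_add[OF _ measurable_w_prim]) simp
    moreover have "X (Suc a) = (\<lambda>\<omega>. A *v X a \<omega> + B *v U a \<omega> + w a \<omega>)"
      by (simp add: fun_eq_iff cl_state_Suc)
    moreover have "Xhat (Suc a) \<in> borel_measurable (prim_info a)"
    proof (rule measurable_cl_est_Suc)
      show "(\<lambda>\<omega>. X (stamp tau a \<omega>) \<omega>) \<in> borel_measurable (prim_info a)"
        by (rule measurable_stamped_state[where c=a])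
          (use X Suc less.prems in \<open>simp_all add: measurable_stamp_prim stamp_le\<close>)
      show "zeta tau a \<in> measurable (prim_info a) (count_space UNIV)"
        by (rule measurable_zeta_prim) (use Suc less.prems in simp)
      show "delta a \<in> measurable (prim_info a) (count_space UNIV)"
        using Suc less.prems by simp
    qed (simp_all add: U Xhat)
    then have "Xhat (Suc a) \<in> borel_measurable (prim_info (Suc a))"
      by (rule measurable_prim_info_mono[rotated]) simp
    ultimately show ?thesis using Suc by simp
  qed
qed

lemma measurable_stamped_state_on_stamp:
  assumes "k \<le> N + 1" "\<And>s. s < k \<Longrightarrow> stopped_at_stamp s" "t \<le> k"
  shows "(\<lambda>\<omega>. X (stamp tau t \<omega>) \<omega>) \<in> borel_measurable (on_stamp k j)"
proof (rule measurable_stamped_state[where c="min j k"])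
  have X_prim: "X b \<in> borel_measurable (prim_info b)" if "b \<le> k" for b
  proof (rule measurable_cl_prim[THEN conjunct1])
    show "delta s \<in> measurable (prim_info s) (count_space UNIV)" if "s < b" for s
      using that \<open>b \<le> k\<close> assms(1,2) by (intro measurable_delta_prim) simp_all
  qed (use that assms(1) in simp)
  show "X b \<in> borel_measurable (on_stamp k j)" if "b \<le> min j k" for b
    using that by (intro measurable_on_stamp measurable_prim_info_mono[OF _ X_prim]) simp_all
  show "stamp tau t \<in> measurable (on_stamp k j) (count_space UNIV)"
    using assms(1,3) by (intro measurable_on_stamp measurable_stamp_prim) simp
  show "stamp tau t \<omega> \<le> min j k" if "\<omega> \<in> space (on_stamp k j)" for \<omega>
    using that stamp_mono[OF assms(3), of tau \<omega>] stamp_le[of tau t \<omega>] assms(3)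
    by (auto simp: stamp_atMost_def)
qed

lemma trigger_gen_Int_stamp_atMost:
  assumes k: "k \<le> N + 1" and stopped: "\<And>s. s < k \<Longrightarrow> stopped_at_stamp s"
    and "g \<in> trigger_gen k"
  shows "g \<inter> stamp_atMost k j \<in> sets (prim_info j)"
proof -
  have stamped_S: "(\<lambda>\<omega>. X (stamp tau t \<omega>) \<omega>) \<in> borel_measurable (on_stamp k j)" if "t \<le> k" for t
    using k stopped that by (rule measurable_stamped_state_on_stamp)
  have zeta_S: "zeta tau t \<in> measurable (on_stamp k j) (count_space UNIV)" if "t \<le> k" for t
    using that k by (intro measurable_on_stamp measurable_zeta_prim) simp
  have delta_S: "delta s \<in> measurable (on_stamp k j) (count_space UNIV)" if "s < k" for s
    by (rule measurable_on_stamp_trigger[OF _ k stopped[OF that] measurable_delta])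
      (use that k in simp_all)
  have U_S: "U s \<in> borel_measurable (on_stamp k j)" if "s < k" for s
    by (rule measurable_on_stamp_trigger[OF _ k stopped[OF that] measurable_cl_input_trigger])
      (use that k in simp_all)
  have eta_S: "eta tau delta t \<in> measurable (on_stamp k j) (count_space UNIV)"
    and ctrl_meas_S: "ctrl_meas t \<in> borel_measurable (on_stamp k j)" if "t \<le> k" for t
    using measurable_eta_ctrl_meas[of t "on_stamp k j"] that delta_S zeta_S stamped_S by simp_all
  from assms(3) consider
      (state) t where "t \<le> k" "g \<in> gen_events M borel (\<lambda>\<omega>. X (stamp tau t \<omega>) \<omega>)"
    | (age) t where "t \<le> k" "g \<in> gen_events M (count_space UNIV) (zeta tau t)"
    | (ctrl_state) t where "t \<le> k" "g \<in> gen_events M borel (ctrl_meas t)"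
    | (ctrl_age) t where "t \<le> k" "g \<in> gen_events M (count_space UNIV) (eta tau delta t)"
    | (trigger) s where "s < k" "g \<in> gen_events M (count_space UNIV) (delta s)"
    | (input) s where "s < k" "g \<in> gen_events M borel (U s)"
    unfolding trigger_gen_def by blast
  then show ?thesis
  proof cases
    case state
    then show ?thesis by (rule gen_events_Int_stamp_atMost[OF k stamped_S])
  next
    case age
    then show ?thesis by (rule gen_events_Int_stamp_atMost[OF k zeta_S])
  next
    case ctrl_state
    then show ?thesis by (rule gen_events_Int_stamp_atMost[OF k ctrl_meas_S])
  next
    case ctrl_age
    then show ?thesis by (rule gen_events_Int_stamp_atMost[OF k eta_S])
  next
    case trigger
    then show ?thesis by (rule gen_events_Int_stamp_atMost[OF k delta_S])
  next
    case input
    then show ?thesis by (rule gen_events_Int_stamp_atMost[OF k U_S])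
  qed
qed

lemma stopped_at_stamp: "k \<le> N + 1 \<Longrightarrow> stopped_at_stamp k"
proof (induction k rule: less_induct)
  case (less k)
  have "G \<inter> stamp_atMost k j \<in> sets (prim_info j)" if "G \<in> sets (F k)" for j G
  proof (rule Int_in_sets_sigma_sets)
    show "G \<in> sigma_sets (space (prim_info j)) (trigger_gen k)"
      using that by (simp add: sets_trigger_info)
    show "stamp_atMost k j \<in> sets (prim_info j)"
      by (rule sets_stamp_atMost[OF less.prems])
    show "g \<inter> stamp_atMost k j \<in> sets (prim_info j)" if "g \<in> trigger_gen k" for g
      using less that by (intro trigger_gen_Int_stamp_atMost) simp_all
  qed
  then show ?case
    by (simp add: stopped_at_stamp_def)
qed

section \<open>The conditional expectation of the state\<close>

lemma sets_trigger_info_subset: "k \<le> N + 1 \<Longrightarrow> sets (F k) \<subseteq> sets M"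
  using stopped_trigger_info_subset[OF stopped_at_stamp] sets_prim_info_subset by blast

lemma measurable_cl_M:
  assumes "k \<le> N + 1"
  shows "X k \<in> borel_measurable M" and "Xhat k \<in> borel_measurable M"
proof -
  have "X k \<in> borel_measurable (prim_info k) \<and> Xhat k \<in> borel_measurable (prim_info k)"
    using assms by (intro measurable_cl_prim measurable_delta_prim stopped_at_stamp) simp_all
  moreover have "subalgebra M (prim_info k)"
    using sets_prim_info_subset[OF assms] by (simp add: subalgebra_def)
  ultimately show "X k \<in> borel_measurable M" "Xhat k \<in> borel_measurable M"
    using measurable_from_subalg by blast+
qed

lemma integrable_cl: "k \<le> N + 1 \<Longrightarrow> integrable M (X k) \<and> integrable M (Xhat k)"
proof (induction k rule: less_induct)
  case (less k)
  show ?case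
  proof (cases k)
    case 0
    have "X 0 = x0" "Xhat 0 = (\<lambda>_. m0)"
      by (simp_all add: fun_eq_iff cl_state_0 cl_est_0)
    then show ?thesis using 0 integrable_x0 by simp
  next
    case (Suc a)
    have X: "integrable M (X b)" and Xhat: "integrable M (Xhat b)" if "b \<le> a" for b
      using less.IH[of b] that Suc less.prems by simp_all
    have U: "integrable M (U b)" if "b \<le> a" for b
      unfolding cl_input_eq using Xhat[OF that]
      by (intro Bochner_Integration.integrable_minus integrable_matrix_vector_mult)
    have "X (Suc a) = (\<lambda>\<omega>. A *v X a \<omega> + B *v U a \<omega> + w a \<omega>)"
      by (simp add: fun_eq_iff cl_state_Suc)
    moreover have "integrable M (\<lambda>\<omega>. A *v X a \<omega> + B *v U a \<omega> + w a \<omega>)"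
      by (intro Bochner_Integration.integrable_add integrable_matrix_vector_mult X U integrable_w)
        (use Suc less.prems in simp_all)
    moreover define g where "g i \<omega> = (if i \<le> a
      then matpow A (i + 1) *v X (a - i) \<omega> + (\<Sum>t = 0..i. matpow A t *v (B *v U (a - t) \<omega>))
      else A *v Xhat a \<omega> + B *v U a \<omega>)" for i \<omega>
    have "integrable M (Xhat (Suc a))"
    proof (rule integrable_finite_choice[where I="{..Suc a}" and g=g])
      show "Xhat (Suc a) \<in> borel_measurable M"
        using measurable_cl_M less.prems Suc by simp
      show "integrable M (g i)" for i
        unfolding g_def using X U Xhat[of a]
        by (cases "i \<le> a") (simp_all add: integrable_matrix_vector_mult)
      show "\<exists>i\<in>{..Suc a}. Xhat (Suc a) \<omega> = g i \<omega>" for \<omega>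
      proof (cases "delta a \<omega>")
        case True
        then have "Xhat (Suc a) \<omega> = g (zeta tau a \<omega>) \<omega>"
          using zeta_le[of tau a \<omega>] by (simp add: cl_est_Suc g_def stamp_def)
        then show ?thesis using zeta_le[of tau a \<omega>] by auto
      next
        case False
        then have "Xhat (Suc a) \<omega> = g (Suc a) \<omega>"
          by (simp add: cl_est_Suc g_def)
        then show ?thesis by blast
      qed
    qed simp
    ultimately show ?thesis using Suc by simp
  qed
qed

lemma fresh_noise_eq_indicator_sum:
  "\<omega> \<in> space M \<Longrightarrow>
    fresh_noise k \<omega> = (\<Sum>j<k. indicator (stamp_atMost k j) \<omega> *\<^sub>R (matpow A (k - 1 - j) *v w j \<omega>))"
  unfolding fresh_noise_def
  by (rule sum.mono_neutral_cong_left) (auto simp: stamp_atMost_def indicator_def)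

lemma sets_stamp_atMost_M: "k \<le> N + 1 \<Longrightarrow> stamp_atMost k j \<in> sets M"
  using sets_stamp_atMost[of k j 0] sets_prim_info_subset[of 0] by auto

lemma integrable_fresh_noise: "k \<le> N + 1 \<Longrightarrow> integrable M (fresh_noise k)"
proof -
  assume k: "k \<le> N + 1"
  have "integrable M (\<lambda>\<omega>. \<Sum>j<k. indicator (stamp_atMost k j) \<omega> *\<^sub>R (matpow A (k - 1 - j) *v w j \<omega>))"
    using k
    by (intro Bochner_Integration.integrable_sum integrable_mult_indicator sets_stamp_atMost_M
        integrable_matrix_vector_mult integrable_w) auto
  moreover have "integrable M (fresh_noise k) \<longleftrightarrow>
      integrable M (\<lambda>\<omega>. \<Sum>j<k. indicator (stamp_atMost k j) \<omega> *\<^sub>R (matpow A (k - 1 - j) *v w j \<omega>))"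
    by (rule Bochner_Integration.integrable_cong) (simp_all add: fresh_noise_eq_indicator_sum)
  ultimately show ?thesis by simp
qed

lemma indep_prim_info_noise:
  assumes "j \<le> N"
  shows "indep_set (sets (prim_info j)) (sigma_sets (space M) (gen_events M borel (w j)))"
proof -
  define I where "I b = (if b then {PX0} \<union> PW ` {..<j} \<union> PTau ` {..N + 1} else {PW j})" for b
  have "indep_sets (\<lambda>b. sigma_sets (space M) (\<Union>i\<in>I b. prim_events M x0 w tau i)) UNIV"
  proof (rule indep_sets_collect_sigma)
    show "indep_sets (prim_events M x0 w tau) (\<Union>b. I b)"
      by (rule indep_sets_mono_index[OF _ indep_prim]) (use assms in \<open>auto simp: I_def\<close>)
    show "Int_stable (prim_events M x0 w tau i)" for i
      by (cases i) (simp_all add: prim_events_def gen_events_Int_stable)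
    show "disjoint_family_on I UNIV"
      by (auto simp: disjoint_family_on_def I_def)
  qed
  moreover have "(\<lambda>b. sigma_sets (space M) (\<Union>i\<in>I b. prim_events M x0 w tau i)) =
      case_bool (sets (prim_info j)) (sigma_sets (space M) (gen_events M borel (w j)))"
    by (rule ext) (auto simp: I_def sets_prim_info prim_gen_def prim_events_def split: bool.split)
  ultimately show ?thesis
    by (simp add: indep_set_def)
qed

lemma integral_indicator_noise:
  fixes \<phi> :: "real^'n \<Rightarrow> real"
  assumes j: "j \<le> N" and D: "D \<in> sets (prim_info j)" and \<phi>: "bounded_linear \<phi>"
  shows "(\<integral>\<omega>. indicator D \<omega> * \<phi> (w j \<omega>) \<partial>M) = 0"
proof -
  have D_M: "D \<in> events"
    using D sets_prim_info_subset[of j] j by auto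
  have w_meas: "w j \<in> borel_measurable M"
    using integrable_w[OF j] by (rule borel_measurable_integrable)
  have \<phi>_meas: "\<phi> \<in> borel_measurable borel"
    by (rule borel_measurable_bounded_linear[OF \<phi>])
  have "gen_events M borel (indicator D :: 'w \<Rightarrow> real) \<subseteq> sets (prim_info j)"
    using borel_measurable_indicator[OF D] by (rule gen_events_subset_sets) simp
  then have "sigma_sets (space M) (gen_events M borel (indicator D :: 'w \<Rightarrow> real))
      \<subseteq> sets (prim_info j)"
    using sets.sigma_sets_subset[of _ "prim_info j"] by simp
  moreover have "sigma_sets (space M) (gen_events M borel (\<lambda>\<omega>. \<phi> (w j \<omega>)))
      \<subseteq> sigma_sets (space M) (gen_events M borel (w j))"
    by (intro sigma_sets_mono' gen_events_comp_subset[OF \<phi>_meas]) simp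
  ultimately have "indep_set (sigma_sets (space M) (gen_events M borel (indicator D :: 'w \<Rightarrow> real)))
      (sigma_sets (space M) (gen_events M borel (\<lambda>\<omega>. \<phi> (w j \<omega>))))"
    by (rule indep_set_mono[OF indep_prim_info_noise[OF j]])
  then have "indep_var borel (indicator D :: 'w \<Rightarrow> real) borel (\<lambda>\<omega>. \<phi> (w j \<omega>))"
    unfolding indep_var_eq gen_events_def
    using D_M measurable_compose[OF w_meas \<phi>_meas] by simp
  then have "(\<integral>\<omega>. indicator D \<omega> * \<phi> (w j \<omega>) \<partial>M) = (\<integral>\<omega>. indicator D \<omega> \<partial>M) * (\<integral>\<omega>. \<phi> (w j \<omega>) \<partial>M)"
    by (rule indep_var_lebesgue_integral)
      (simp_all add: D_M less_top[symmetric] integrable_bounded_linear[OF \<phi> integrable_w[OF j]])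
  also have "(\<integral>\<omega>. \<phi> (w j \<omega>) \<partial>M) = \<phi> (\<integral>\<omega>. w j \<omega> \<partial>M)"
    by (rule integral_bounded_linear[OF \<phi> integrable_w[OF j]])
  finally show ?thesis
    by (simp add: integral_w[OF j] linear_0[OF bounded_linear.linear[OF \<phi>]])
qed

lemma integral_indicator_fresh_noise:
  assumes k: "k \<le> N + 1" and G: "G \<in> sets (F k)"
  shows "(\<integral>\<omega>. indicator G \<omega> * fresh_noise k \<omega> $ i \<partial>M) = 0"
proof -
  define \<phi> where "\<phi> j v = (matpow A (k - 1 - j) *v v) $ i" for j v
  have \<phi>: "bounded_linear (\<phi> j)" for j
    unfolding \<phi>_def
    by (rule bounded_linear_compose[OF bounded_linear_vec_nth matrix_vector_mul_bounded_linear])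
  have G_M: "G \<in> sets M"
    using sets_trigger_info_subset[OF k] G by auto
  have D: "G \<inter> stamp_atMost k j \<in> sets (prim_info j)" for j
    using stopped_at_stamp[OF k] G by (simp add: stopped_at_stamp_def)
  have "(\<integral>\<omega>. indicator G \<omega> * fresh_noise k \<omega> $ i \<partial>M)
      = (\<integral>\<omega>. (\<Sum>j<k. indicator (G \<inter> stamp_atMost k j) \<omega> * \<phi> j (w j \<omega>)) \<partial>M)"
    by (rule Bochner_Integration.integral_cong[OF refl])
      (simp add: fresh_noise_eq_indicator_sum sum_distrib_left indicator_inter_arith \<phi>_def
        mult.assoc conj_ac)
  also have "\<dots> = (\<Sum>j<k. \<integral>\<omega>. indicator (G \<inter> stamp_atMost k j) \<omega> * \<phi> j (w j \<omega>) \<partial>M)"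
  proof (rule Bochner_Integration.integral_sum)
    fix j assume "j \<in> {..<k}"
    then have "integrable M (\<lambda>\<omega>. \<phi> j (w j \<omega>) * indicator (G \<inter> stamp_atMost k j) \<omega>)"
      using k G_M sets_stamp_atMost_M[OF k]
      by (intro integrable_real_mult_indicator integrable_bounded_linear[OF \<phi> integrable_w]) auto
    then show "integrable M (\<lambda>\<omega>. indicator (G \<inter> stamp_atMost k j) \<omega> * \<phi> j (w j \<omega>))"
      by (simp add: mult.commute)
  qed
  also have "\<dots> = 0"
    using k by (intro sum.neutral ballI integral_indicator_noise[OF _ D \<phi>]) auto
  finally show ?thesis .
qed

lemma measurable_xcheck_trigger: "k \<le> N + 1 \<Longrightarrow> xcheck k \<in> borel_measurable (F k)"
proof -
  define G where "G i \<omega> = matpow A i *v X (stamp tau k \<omega>) \<omega>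
    + (\<Sum>j = k - i..<k. matpow A (k - 1 - j) *v (B *v U j \<omega>))" for i \<omega>
  have "G i \<in> borel_measurable (F k)" for i
    unfolding G_def
    by (intro borel_measurable_add borel_measurable_sum borel_measurable_matrix_vector_mult
        measurable_stamped_state_trigger measurable_past_input_trigger) auto
  then have "(\<lambda>\<omega>. G (zeta tau k \<omega>) \<omega>) \<in> borel_measurable (F k)"
    by (rule measurable_compose_countable[OF _ measurable_zeta_trigger]) simp
  moreover have "xcheck k = (\<lambda>\<omega>. G (zeta tau k \<omega>) \<omega>)"
    by (simp add: fun_eq_iff xcheck_def G_def stamp_def)
  ultimately show ?thesis by simp
qed

lemma cond_exp_cl_state_component:
  assumes k: "k \<le> N + 1"
  shows "AE \<omega> in M. real_cond_exp M (F k) (\<lambda>\<omega>. X k \<omega> $ i) \<omega> = xcheck k \<omega> $ i"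
proof -
  interpret finite_measure_subalgebra M "F k"
    by unfold_locales (use sets_trigger_info_subset[OF k] in \<open>simp add: subalgebra_def\<close>)
  have X_i: "integrable M (\<lambda>\<omega>. X k \<omega> $ i)"
    using integrable_cl[OF k] by (intro integrable_bounded_linear[OF bounded_linear_vec_nth]) simp
  have fresh_i: "integrable M (\<lambda>\<omega>. fresh_noise k \<omega> $ i)"
    by (rule integrable_bounded_linear[OF bounded_linear_vec_nth integrable_fresh_noise[OF k]])
  have xcheck_i: "xcheck k \<omega> $ i = X k \<omega> $ i - fresh_noise k \<omega> $ i" for \<omega>
    by (simp add: cl_state_split)
  show ?thesis
  proof (rule real_cond_exp_charact)
    fix G assume G: "G \<in> sets (F k)"
    then have G_M: "G \<in> sets M"
      using sets_trigger_info_subset[OF k] by auto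
    have "(\<integral>\<omega>. indicator G \<omega> * xcheck k \<omega> $ i \<partial>M)
        = (\<integral>\<omega>. indicator G \<omega> * X k \<omega> $ i - indicator G \<omega> * fresh_noise k \<omega> $ i \<partial>M)"
      by (simp add: xcheck_i right_diff_distrib)
    also have "\<dots> = (\<integral>\<omega>. indicator G \<omega> * X k \<omega> $ i \<partial>M)
        - (\<integral>\<omega>. indicator G \<omega> * fresh_noise k \<omega> $ i \<partial>M)"
      using integrable_mult_indicator[OF G_M X_i] integrable_mult_indicator[OF G_M fresh_i]
      by (intro Bochner_Integration.integral_diff) simp_all
    also have "(\<integral>\<omega>. indicator G \<omega> * fresh_noise k \<omega> $ i \<partial>M) = 0"
      by (rule integral_indicator_fresh_noise[OF k G])
    finally show "(\<integral>\<omega>\<in>G. X k \<omega> $ i \<partial>M) = (\<integral>\<omega>\<in>G. xcheck k \<omega> $ i \<partial>M)"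
      by (simp add: set_lebesgue_integral_def)
  next
    show "integrable M (\<lambda>\<omega>. X k \<omega> $ i)" by (rule X_i)
    show "integrable M (\<lambda>\<omega>. xcheck k \<omega> $ i)"
      unfolding xcheck_i using X_i fresh_i by (rule Bochner_Integration.integrable_diff)
    show "(\<lambda>\<omega>. xcheck k \<omega> $ i) \<in> borel_measurable (F k)"
      by (rule measurable_compose[OF measurable_xcheck_trigger[OF k] borel_measurable_nth])
  qed
qed

lemma cond_exp_cl_state:
  assumes "k \<le> N + 1"
  shows "AE \<omega> in M. cond_exp_vec M (F k) (X k) \<omega> = xcheck k \<omega>"
proof -
  have "AE \<omega> in M. \<forall>i\<in>UNIV. real_cond_exp M (F k) (\<lambda>\<omega>. X k \<omega> $ i) \<omega> = xcheck k \<omega> $ i"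
    by (rule eventually_ball_finite) (simp_all add: cond_exp_cl_state_component[OF assms])
  then show ?thesis
    by eventually_elim (simp add: cond_exp_vec_def vec_eq_iff)
qed

theorem estimation_mismatch:
  "(AE \<omega> in M. cond_exp_vec M (F 0) (X 0) \<omega> - Xhat 0 \<omega> = x0 \<omega> - m0) \<and>
   (\<forall>k\<le>N. AE \<omega> in M. cond_exp_vec M (F (Suc k)) (X (Suc k)) \<omega> - Xhat (Suc k) \<omega> =
      (1 - of_bool (delta k \<omega>)) *\<^sub>R (A *v (cond_exp_vec M (F k) (X k) \<omega> - Xhat k \<omega>))
      + (\<Sum>t \<in> {zeta tau (Suc k) \<omega>..zeta tau k \<omega>}. matpow A t *v w (k - t) \<omega>))"
proof (intro conjI allI impI)
  have "AE \<omega> in M. cond_exp_vec M (F 0) (X 0) \<omega> = xcheck 0 \<omega>"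
    by (rule cond_exp_cl_state) simp
  then show "AE \<omega> in M. cond_exp_vec M (F 0) (X 0) \<omega> - Xhat 0 \<omega> = x0 \<omega> - m0"
    by eventually_elim (simp add: xcheck_0 cl_est_0)
  fix k assume k: "k \<le> N"
  have "AE \<omega> in M. cond_exp_vec M (F k) (X k) \<omega> = xcheck k \<omega>"
    and "AE \<omega> in M. cond_exp_vec M (F (Suc k)) (X (Suc k)) \<omega> = xcheck (Suc k) \<omega>"
    using k by (simp_all add: cond_exp_cl_state)
  then show "AE \<omega> in M. cond_exp_vec M (F (Suc k)) (X (Suc k)) \<omega> - Xhat (Suc k) \<omega> =
      (1 - of_bool (delta k \<omega>)) *\<^sub>R (A *v (cond_exp_vec M (F k) (X k) \<omega> - Xhat k \<omega>))
      + (\<Sum>t \<in> {zeta tau (Suc k) \<omega>..zeta tau k \<omega>}. matpow A t *v w (k - t) \<omega>)"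
    by eventually_elim (simp add: xcheck_Suc_minus_est)
qed

end

lemma pd_imp_psd_mat: "pd_mat C \<Longrightarrow> psd_mat C"
  unfolding pd_mat_def psd_mat_def by (metis inner_zero_left less_imp_le order_refl)

lemma gaussian_vec_inner:
  assumes "prob_space M" "gaussian_vec M X m C" "psd_mat C"
  shows "integrable M (\<lambda>\<omega>. a \<bullet> X \<omega>)" and "(\<integral>\<omega>. a \<bullet> X \<omega> \<partial>M) = a \<bullet> m"
proof -
  interpret prob_space M by (rule assms(1))
  have "X \<in> borel_measurable M"
    using assms(2) by (simp add: gaussian_vec_def)
  then have meas: "(\<lambda>\<omega>. a \<bullet> X \<omega>) \<in> borel_measurable M"
    by measurable
  have "integrable M (\<lambda>\<omega>. a \<bullet> X \<omega>) \<and> (\<integral>\<omega>. a \<bullet> X \<omega> \<partial>M) = a \<bullet> m"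
  proof (cases "a \<bullet> (C *v a) = 0")
    case True
    then have ae: "AE \<omega> in M. a \<bullet> X \<omega> = a \<bullet> m"
      using assms(2) by (simp add: gaussian_vec_def)
    have "integrable M (\<lambda>\<omega>. a \<bullet> X \<omega>) \<longleftrightarrow> integrable M (\<lambda>\<omega>. a \<bullet> m)"
      by (rule integrable_cong_AE[OF meas _ ae]) simp
    moreover have "(\<integral>\<omega>. a \<bullet> X \<omega> \<partial>M) = (\<integral>\<omega>. a \<bullet> m \<partial>M)"
      by (rule integral_cong_AE[OF meas _ ae]) simp
    ultimately show ?thesis by (simp add: prob_space)
  next
    case False
    then have pos: "0 < sqrt (a \<bullet> (C *v a))"
      using assms(3) by (simp add: psd_mat_def order_less_le)
    then have distr: "distributed M lborel (\<lambda>\<omega>. a \<bullet> X \<omega>)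
        (normal_density (a \<bullet> m) (sqrt (a \<bullet> (C *v a))))"
      using assms(2) by (simp add: gaussian_vec_def)
    show ?thesis
      using distributed_integrable[OF distr, of "\<lambda>x. x"] integrable_normal_moment_nz_1[OF pos]
        normal_distributed_expectation[OF pos distr] by simp
  qed
  then show "integrable M (\<lambda>\<omega>. a \<bullet> X \<omega>)" and "(\<integral>\<omega>. a \<bullet> X \<omega> \<partial>M) = a \<bullet> m"
    by simp_all
qed

lemma gaussian_vec_integrable:
  fixes X :: "'w \<Rightarrow> real^'n"
  assumes "prob_space M" "gaussian_vec M X m C" "psd_mat C"
  shows "integrable M X" and "(\<integral>\<omega>. X \<omega> \<partial>M) = m"
proof -
  have repr: "(\<Sum>b\<in>Basis. (b \<bullet> v) *\<^sub>R b) = v" for v :: "real^'n"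
    using euclidean_representation[of v] by (simp add: inner_commute)
  then have X_eq: "X = (\<lambda>\<omega>. \<Sum>b\<in>Basis. (b \<bullet> X \<omega>) *\<^sub>R b)"
    by (simp add: fun_eq_iff)
  show "integrable M X"
    by (subst X_eq) (intro Bochner_Integration.integrable_sum integrable_scaleR_left
        gaussian_vec_inner(1)[OF assms])
  have "(\<integral>\<omega>. X \<omega> \<partial>M) = (\<Sum>b\<in>Basis. (b \<bullet> m) *\<^sub>R b)"
    by (subst X_eq) (simp add: Bochner_Integration.integral_sum gaussian_vec_inner[OF assms])
  then show "(\<integral>\<omega>. X \<omega> \<partial>M) = m"
    by (simp add: repr)
qed

theorem lemma5:
  fixes M :: "'w measure"
    and N :: nat
    and A :: "real^'n^'n" and B :: "real^'m^'n"
    and Q :: "real^'n^'n" and R :: "real^'m^'m"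
    and W :: "real^'n^'n" and M0 :: "real^'n^'n" and m0 :: "real^'n"
    and x0 :: "'w \<Rightarrow> real^'n"
    and w :: "nat \<Rightarrow> 'w \<Rightarrow> real^'n"
    and tau :: "nat \<Rightarrow> 'w \<Rightarrow> nat"
    and delta :: "nat \<Rightarrow> 'w \<Rightarrow> bool"
  defines "L \<equiv> lqr_gain A B Q R N"
  defines "x \<equiv> cl_state A B L m0 x0 w tau delta"
  defines "xhat \<equiv> cl_est A B L m0 x0 w tau delta"
  defines "u \<equiv> cl_input A B L m0 x0 w tau delta"
  defines "F \<equiv> trigger_info M x u tau delta"
  defines "etil \<equiv> (\<lambda>k \<omega>. cond_exp_vec M (F k) (x k) \<omega> - xhat k \<omega>)"
  assumes "prob_space M"
    and "psd_mat Q" and "pd_mat R" and "pd_mat W" and "psd_mat M0"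
    and "gaussian_vec M x0 m0 M0"
    and "\<forall>k\<le>N. gaussian_vec M (w k) 0 W"
    and "\<forall>k\<le>N + 1. tau k \<in> measurable M (count_space UNIV)"
    and "\<forall>\<omega>\<in>space M. tau 0 \<omega> = 0"
    and "prob_space.indep_sets M (prim_events M x0 w tau)
           ({PX0} \<union> PW ` {..N} \<union> PTau ` {..N + 1})"
    and "\<forall>k\<le>N. delta k \<in> measurable (F k) (count_space UNIV)"
  shows "(AE \<omega> in M. etil 0 \<omega> = x0 \<omega> - m0) \<and>
         (\<forall>k\<le>N. AE \<omega> in M.
            etil (Suc k) \<omega> =
              (1 - of_bool (delta k \<omega>)) *\<^sub>R (A *v etil k \<omega>)
              + (\<Sum>t \<in> {zeta tau (Suc k) \<omega>..zeta tau k \<omega>}. matpow A t *v w (k - t) \<omega>))"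
proof -
  have psd_W: "psd_mat W"
    using assms(10) by (rule pd_imp_psd_mat)
  have gaussian_w: "gaussian_vec M (w k) 0 W" if "k \<le> N" for k
    using assms(13) that by simp
  interpret closed_loop_prob A B L m0 x0 w tau delta M N
  proof (intro closed_loop_prob.intro closed_loop_prob_axioms.intro)
    show "prob_space M" by (rule assms(7))
    show "integrable M x0"
      by (rule gaussian_vec_integrable(1)[OF assms(7,12,11)])
    show "integrable M (w k)" if "k \<le> N" for k
      by (rule gaussian_vec_integrable(1)[OF assms(7) gaussian_w[OF that] psd_W])
    show "(\<integral>\<omega>. w k \<omega> \<partial>M) = 0" if "k \<le> N" for k
      by (rule gaussian_vec_integrable(2)[OF assms(7) gaussian_w[OF that] psd_W])
    show "tau k \<in> measurable M (count_space UNIV)" if "k \<le> N + 1" for k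
      using assms(14) that by simp
    show "prob_space.indep_sets M (prim_events M x0 w tau) ({PX0} \<union> PW ` {..N} \<union> PTau ` {..N + 1})"
      by (rule assms(16))
    show "delta k \<in> measurable (trigger_info M (cl_state A B L m0 x0 w tau delta)
        (cl_input A B L m0 x0 w tau delta) tau delta k) (count_space UNIV)" if "k \<le> N" for k
      using assms(17) that by (simp add: F_def x_def u_def)
  qed
  show ?thesis
    using estimation_mismatch unfolding etil_def F_def x_def xhat_def u_def by simp
qed

end
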